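(* Let $H$ and $U$ be Hilbert spaces, let $A\colon D(A)\subset H\to H$ be the generator of a strongly continuous contraction semigroup $\{e^{tA}\}_{t\ge0}$ on $H$, and let $B\colon U\to H$ be a bounded linear operator with adjoint $B^*\colon H\to U$. Let $\alpha\colon[0,\infty)\to[0,1]$ be measurable, let $z_0\in H$, and let $z(\cdot)\in C([0,\infty);H)$ be the mild solution of $\dot z = Az-\alpha(t)BB^*z$, $z(0)=z_0$, i.e. $$z(t)=e^{tA}z_0-\int_0^t e^{(t-s)A}\alpha(s)BB^*z(s)\,ds,\qquad t\ge0.$$ Set $V(z)=\tfrac12\|z\|_H^2$. Then for all $0\le a\le b<\infty$, $$V(z(b))-V(z(a))\le -\bigl(2+2(b-a)^2\|B\|^4\bigr)^{-1}\int_0^{b-a}\alpha(t+a)\,\|B^*e^{tA}z(a)\|_U^2\,dt.$$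
   Context: The mild solution exists and is unique for every measurable $\alpha$ with values in $[0,1]$ and every $z_0\in H$. *)

theory Defs
  imports "HOL-Analysis.Analysis"
begin

text \<open>A strongly continuous (C0) contraction semigroup on a real normed space,
  given by its family of bounded operators T t = e^{tA}, t \<ge> 0.\<close>
definition C0_contraction_semigroup :: "(real \<Rightarrow> ('h::real_normed_vector \<Rightarrow>\<^sub>L 'h)) \<Rightarrow> bool" where
  "C0_contraction_semigroup T \<longleftrightarrow>
     T 0 = id_blinfun \<and>
     (\<forall>t s. 0 \<le> t \<longrightarrow> 0 \<le> s \<longrightarrow> T (t + s) = T t o\<^sub>L T s) \<and>
     (\<forall>x. continuous_on {0..} (\<lambda>t. blinfun_apply (T t) x)) \<and>
     (\<forall>t. 0 \<le> t \<longrightarrow> norm (T t) \<le> 1)"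

definition is_adjoint :: "('u::real_inner \<Rightarrow>\<^sub>L 'h::real_inner) \<Rightarrow> ('h \<Rightarrow>\<^sub>L 'u) \<Rightarrow> bool" where
  "is_adjoint B Bs \<longleftrightarrow> (\<forall>u h. inner (blinfun_apply B u) h = inner u (blinfun_apply Bs h))"

definition mild_solution ::
  "(real \<Rightarrow> ('h::{real_inner,complete_space} \<Rightarrow>\<^sub>L 'h)) \<Rightarrow> ('u::{real_inner,complete_space} \<Rightarrow>\<^sub>L 'h)
    \<Rightarrow> ('h \<Rightarrow>\<^sub>L 'u) \<Rightarrow> (real \<Rightarrow> real) \<Rightarrow> 'h \<Rightarrow> (real \<Rightarrow> 'h) \<Rightarrow> bool" where
  "mild_solution T B Bs \<alpha> z0 z \<longleftrightarrow>
     continuous_on {0..} z \<and>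
     (\<forall>t. 0 \<le> t \<longrightarrow>
        ((\<lambda>s. blinfun_apply (T (t - s)) (\<alpha> s *\<^sub>R blinfun_apply B (blinfun_apply Bs (z s))))
           has_integral (blinfun_apply (T t) z0 - z t)) {0..t})"

definition V :: "'h::real_normed_vector \<Rightarrow> real" where
  "V x = (1/2) * (norm x)\<^sup>2"

end

theory Submission imports Defs begin

(* Pairing the mild solution with z(t + h) and using that e^{hA} is a contraction gives
   \<parallel>z(t+h)\<parallel>^2 + 2 \<integral>_t^{t+h} \<alpha> \<parallel>B^* z\<parallel>^2 \<le> \<parallel>z(t)\<parallel>^2 + o(h) uniformly in t, by uniform continuity of
   (t, s) \<mapsto> <z t, e^{(t-s)A} B B^* z s> on a compact square; summing over fine partitions gives
   V(z b) - V(z a) \<le> -\<integral>_a^b \<alpha> \<parallel>B^* z\<parallel>^2.  Restarting the mild solution at a, B^* e^{(s-a)A} z(a)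
   differs from B^* z(s) by B^* of the feedback integral, whose norm is at most
   \<parallel>B\<parallel>^2 \<integral>_a^s \<alpha> \<parallel>B^* z\<parallel>; Cauchy-Schwarz and \<alpha> \<le> 1 then bound the observed quantity
   \<integral>_0^{b-a} \<alpha>(t+a) \<parallel>B^* e^{tA} z(a)\<parallel>^2 by (2 + 2 (b-a)^2 \<parallel>B\<parallel>^4) times the dissipated energy. *)

declare [[coercion blinfun_apply]]

lemma borel_measurable_lebesgue_on_if_restrict_lborel:
  fixes f :: "real \<Rightarrow> real"
  assumes "f \<in> borel_measurable (restrict_space lborel S)" and "X \<subseteq> S"
  shows "f \<in> borel_measurable (lebesgue_on X)"
proof -
  have f: "f \<in> borel_measurable (restrict_space lborel X)"
    using measurable_restrict_mono[OF assms(1)] assms(2) .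
  have "sets (restrict_space lborel X) \<subseteq> sets (lebesgue_on X)"
    by (rule mono_restrict_space) (auto intro: sets_completionI_sets)
  then show ?thesis
    by (rule borel_measurable_subalgebra[OF _ _ f]) (simp add: space_restrict_space)
qed

lemma integrable_on_mult_continuous_bounded_measurable:
  fixes m c :: "real \<Rightarrow> real"
  assumes m: "m \<in> borel_measurable (lebesgue_on {x..y})"
    and bounded: "\<And>s. s \<in> {x..y} \<Longrightarrow> \<bar>m s\<bar> \<le> K"
    and c: "continuous_on {x..y} c"
  shows "(\<lambda>s. m s * c s) integrable_on {x..y}"
proof -
  have "bounded (c ` {x..y})"
    by (intro compact_imp_bounded compact_continuous_image c compact_Icc)
  then obtain L where L: "\<forall>v \<in> c ` {x..y}. \<bar>v\<bar> \<le> L"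
    unfolding bounded_iff real_norm_def by blast
  have "c \<in> borel_measurable (lebesgue_on {x..y})"
    by (rule continuous_imp_measurable_on_sets_lebesgue[OF c]) auto
  with m have measurable: "(\<lambda>s. m s * c s) \<in> borel_measurable (lebesgue_on {x..y})"
    by (rule borel_measurable_times)
  have bound: "\<bar>m s * c s\<bar> \<le> K * L" if "s \<in> {x..y}" for s
    unfolding abs_mult using bounded[OF that] L that by (intro mult_mono) auto
  show ?thesis
    by (rule measurable_bounded_by_integrable_imp_integrable_real[OF measurable _ bound]) auto
qed

lemma Cauchy_Schwarz_integral_Icc:
  fixes R :: "real \<Rightarrow> real"
  assumes "R integrable_on {x..y}" and "(\<lambda>s. (R s)\<^sup>2) integrable_on {x..y}" and "x \<le> y"
  shows "(integral {x..y} R)\<^sup>2 \<le> (y - x) * integral {x..y} (\<lambda>s. (R s)\<^sup>2)"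
proof (cases "x = y")
  case False
  with assms have xy: "x < y" by simp
  define I where "I = integral {x..y} R"
  define J where "J = integral {x..y} (\<lambda>s. (R s)\<^sup>2)"
  define m where "m = I / (y - x)"
  have "((\<lambda>s. (R s)\<^sup>2 - 2 * m * R s + m\<^sup>2) has_integral J - 2 * m * I + (y - x) * m\<^sup>2) {x..y}"
    using assms xy has_integral_const_real[of "m\<^sup>2" x y] unfolding I_def J_def
    by (intro has_integral_add has_integral_diff has_integral_mult_right integrable_integral) auto
  moreover have "(R s)\<^sup>2 - 2 * m * R s + m\<^sup>2 = (R s - m)\<^sup>2" for s
    by (simp add: power2_eq_square algebra_simps)
  ultimately have "0 \<le> J - 2 * m * I + (y - x) * m\<^sup>2"
    by (metis (no_types, lifting) has_integral_nonneg zero_le_power2)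
  with xy have "0 \<le> (y - x) * (J - 2 * m * I + (y - x) * m\<^sup>2)"
    by simp
  also have "\<dots> = (y - x) * J - (2 * ((y - x) * m) * I - ((y - x) * m)\<^sup>2)"
    by (simp add: power2_eq_square algebra_simps)
  also have "(y - x) * m = I"
    using xy by (simp add: m_def)
  finally show ?thesis
    unfolding I_def J_def by (simp add: power2_eq_square)
qed simp

lemma le_if_local_increments_le:
  fixes \<phi> :: "real \<Rightarrow> real"
  assumes "a \<le> b"
    and local: "\<And>e. 0 < e \<Longrightarrow> \<exists>d>0. \<forall>t h. a \<le> t \<longrightarrow> 0 \<le> h \<longrightarrow> h < d \<longrightarrow> t + h \<le> b \<longrightarrow>
      \<phi> (t + h) \<le> \<phi> t + h * e"
  shows "\<phi> b \<le> \<phi> a"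
proof -
  have linear_bound: "\<phi> b \<le> \<phi> a + (b - a) * e" if e: "0 < e" for e
  proof -
    obtain d where d: "d > 0" and step: "\<And>t h. a \<le> t \<Longrightarrow> 0 \<le> h \<Longrightarrow> h < d \<Longrightarrow> t + h \<le> b \<Longrightarrow>
        \<phi> (t + h) \<le> \<phi> t + h * e"
      using local[OF e] by blast
    obtain N :: nat where N: "(b - a) / d < real N"
      using reals_Archimedean2 by blast
    moreover have "0 \<le> (b - a) / d"
      using d \<open>a \<le> b\<close> by simp
    ultimately have N0: "0 < real N"
      by linarith
    define h where "h = (b - a) / real N"
    have h: "0 \<le> h" "h < d" "real N * h = b - a"
      using N N0 d \<open>a \<le> b\<close> unfolding h_def by (auto simp: field_simps)
    have "\<phi> (a + real k * h) \<le> \<phi> a + real k * h * e" if "k \<le> N" for k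
      using that
    proof (induction k)
      case (Suc k)
      have "real (Suc k) * h \<le> real N * h"
        using Suc.prems h by (intro mult_right_mono) auto
      with h(3) have "\<phi> (a + real k * h + h) \<le> \<phi> (a + real k * h) + h * e"
        using h by (intro step) (auto simp: algebra_simps)
      with Suc show ?case
        by (simp add: algebra_simps)
    qed simp
    from this[of N] show ?thesis
      using h by simp
  qed
  show ?thesis
  proof (rule field_le_epsilon)
    fix e :: real assume "0 < e"
    then have "\<phi> b \<le> \<phi> a + (b - a) * (e / (b - a + 1))"
      using \<open>a \<le> b\<close> by (intro linear_bound) auto
    also have "(b - a) * (e / (b - a + 1)) \<le> e"
      using \<open>0 < e\<close> \<open>a \<le> b\<close> by (simp add: field_simps)
    finally show "\<phi> b \<le> \<phi> a + e" by simp
  qed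
qed

lemma is_adjoint_inner_apply_self:
  assumes "is_adjoint B Bs"
  shows "inner x (B (Bs x)) = (norm (Bs x))\<^sup>2"
  using assms by (simp add: is_adjoint_def inner_commute power2_norm_eq_inner)

lemma is_adjoint_norm_apply_le:
  assumes "is_adjoint B Bs"
  shows "norm (Bs h) \<le> norm B * norm h"
proof -
  have "(norm (Bs h))\<^sup>2 \<le> norm h * norm (B (Bs h))"
    unfolding is_adjoint_inner_apply_self[OF assms, symmetric]
    by (rule order_trans[OF norm_cauchy_schwarz]) simp
  also have "\<dots> \<le> norm h * (norm B * norm (Bs h))"
    by (intro mult_left_mono norm_blinfun) auto
  finally show ?thesis
    by (cases "Bs h = 0") (auto simp: power2_eq_square algebra_simps mult_le_cancel_right)
qed

lemma C0_contraction_semigroup_zero: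
  "C0_contraction_semigroup T \<Longrightarrow> T 0 x = x"
  by (simp add: C0_contraction_semigroup_def)

lemma C0_contraction_semigroup_add:
  "C0_contraction_semigroup T \<Longrightarrow> 0 \<le> t \<Longrightarrow> 0 \<le> s \<Longrightarrow> T (t + s) x = T t (T s x)"
  by (simp add: C0_contraction_semigroup_def)

lemma C0_contraction_semigroup_continuous_on:
  "C0_contraction_semigroup T \<Longrightarrow> continuous_on {0..} (\<lambda>t. T t x)"
  by (simp add: C0_contraction_semigroup_def)

lemma C0_contraction_semigroup_norm_le:
  assumes "C0_contraction_semigroup T" and "0 \<le> t"
  shows "norm (T t x) \<le> norm x"
proof -
  have "norm (T t) \<le> 1"
    using assms by (simp add: C0_contraction_semigroup_def)
  then show ?thesis
    using norm_blinfun[of "T t" x] mult_right_mono[of "norm (T t)" 1 "norm x"] by simp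
qed

text \<open>Strong continuity plus the uniform bound give joint continuity in time and state.\<close>
lemma C0_contraction_semigroup_continuous_on_joint:
  assumes T: "C0_contraction_semigroup T"
  shows "continuous_on ({0..} \<times> UNIV) (\<lambda>p. T (fst p) (snd p))"
  unfolding continuous_on_def
proof (intro ballI)
  fix p :: "real \<times> 'a" assume p: "p \<in> {0..} \<times> UNIV"
  define S where "S = {0::real..} \<times> (UNIV :: 'a set)"
  obtain r0 x0 where p_eq: "p = (r0, x0)" by (cases p)
  have "continuous_on S (\<lambda>q. T (fst q) x0)"
    unfolding S_def
    by (rule continuous_on_compose2[OF C0_contraction_semigroup_continuous_on[OF T] continuous_on_fst]) auto
  with p have "((\<lambda>q. T (fst q) x0 - T r0 x0) \<longlongrightarrow> 0) (at p within S)"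
    unfolding S_def p_eq continuous_on_def by (auto intro: LIM_zero)
  moreover have "((\<lambda>q. snd q - x0) \<longlongrightarrow> 0) (at p within S)"
    using tendsto_snd[OF tendsto_ident_at, of p S] unfolding p_eq by (intro LIM_zero) simp
  ultimately have "((\<lambda>q. norm (snd q - x0) + norm (T (fst q) x0 - T r0 x0)) \<longlongrightarrow> 0) (at p within S)"
    using tendsto_add[OF tendsto_norm_zero tendsto_norm_zero] by simp
  moreover have "norm (T (fst q) (snd q) - T r0 x0) \<le> norm (snd q - x0) + norm (T (fst q) x0 - T r0 x0)"
    if "q \<in> S" for q
  proof -
    have "norm (T (fst q) (snd q) - T (fst q) x0) \<le> norm (snd q - x0)"
      using C0_contraction_semigroup_norm_le[OF T, of "fst q" "snd q - x0"] that
      by (simp add: S_def mem_Times_iff blinfun.diff_right)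
    then show ?thesis
      using norm_triangle_ineq[of "T (fst q) (snd q) - T (fst q) x0" "T (fst q) x0 - T r0 x0"] by simp
  qed
  then have "\<forall>\<^sub>F q in at p within S.
      norm (T (fst q) (snd q) - T r0 x0) \<le> norm (snd q - x0) + norm (T (fst q) x0 - T r0 x0)"
    by (auto simp: eventually_at_filter)
  ultimately have "((\<lambda>q. T (fst q) (snd q) - T r0 x0) \<longlongrightarrow> 0) (at p within S)"
    by (rule Lim_null_comparison[rotated])
  then show "((\<lambda>q. T (fst q) (snd q)) \<longlongrightarrow> T (fst p) (snd p)) (at p within {0..} \<times> UNIV)"
    unfolding S_def p_eq by (simp add: LIM_zero_cancel)
qed

context
  fixes T :: "real \<Rightarrow> ('h::{real_inner,complete_space} \<Rightarrow>\<^sub>L 'h)"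
    and B :: "'u::{real_inner,complete_space} \<Rightarrow>\<^sub>L 'h"
    and Bs :: "'h \<Rightarrow>\<^sub>L 'u"
    and \<alpha> :: "real \<Rightarrow> real"
    and z0 :: 'h
    and z :: "real \<Rightarrow> 'h"
  assumes T: "C0_contraction_semigroup T"
    and adjoint: "is_adjoint B Bs"
    and \<alpha>_measurable: "\<alpha> \<in> borel_measurable (restrict_space lborel {0..})"
    and \<alpha>_range: "\<forall>t. 0 \<le> t \<longrightarrow> 0 \<le> \<alpha> t \<and> \<alpha> t \<le> 1"
    and mild: "mild_solution T B Bs \<alpha> z0 z"
begin

lemma alpha_nonneg: "0 \<le> t \<Longrightarrow> 0 \<le> \<alpha> t"
  and alpha_le_one: "0 \<le> t \<Longrightarrow> \<alpha> t \<le> 1"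
  using \<alpha>_range by auto

lemma integrable_on_alpha_mult:
  assumes "0 \<le> x" and "continuous_on {x..y} c"
  shows "(\<lambda>s. \<alpha> s * c s) integrable_on {x..y}"
  using assms alpha_nonneg alpha_le_one
  by (intro integrable_on_mult_continuous_bounded_measurable[where K = 1]
      borel_measurable_lebesgue_on_if_restrict_lborel[OF \<alpha>_measurable]) auto

lemma continuous_on_mild_solution: "0 \<le> x \<Longrightarrow> continuous_on {x..y} z"
  using mild unfolding mild_solution_def by (auto elim: continuous_on_subset)

text \<open>The type \<open>'h\<close> is not known to be a \<open>banach\<close> instance, so integrability on
  subintervals is only available after pairing with a fixed vector \<open>v\<close>.\<close>
lemma mild_solution_restart:
  assumes t: "0 \<le> t" and h: "0 \<le> h"
  shows "((\<lambda>s. inner v (T (t + h - s) (\<alpha> s *\<^sub>R B (Bs (z s)))))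
     has_integral inner v (T h (z t) - z (t + h))) {t..t + h}"
proof -
  define F where "F s = T (t + h - s) (\<alpha> s *\<^sub>R B (Bs (z s)))" for s
  define f where "f s = inner v (F s)" for s
  have mild_at: "((\<lambda>s. T (r - s) (\<alpha> s *\<^sub>R B (Bs (z s)))) has_integral T r z0 - z r) {0..r}"
    if "0 \<le> r" for r
    using mild that by (simp add: mild_solution_def)
  have whole: "(f has_integral inner v (T (t + h) z0 - z (t + h))) {0..t + h}"
    using has_integral_linear[OF mild_at[of "t + h"] bounded_linear_inner_right[of v]] t h
    unfolding f_def F_def o_def by simp
  have "((T h \<circ> (\<lambda>s. T (t - s) (\<alpha> s *\<^sub>R B (Bs (z s))))) has_integral T h (T t z0 - z t)) {0..t}"
    by (rule has_integral_linear[OF mild_at[OF t] blinfun.bounded_linear_right])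
  moreover have "(T h \<circ> (\<lambda>s. T (t - s) (\<alpha> s *\<^sub>R B (Bs (z s))))) s = F s" if "s \<in> {0..t}" for s
    using C0_contraction_semigroup_add[OF T h, of "t - s"] that
    by (simp add: F_def add.commute add_diff_eq)
  ultimately have "(F has_integral T h (T t z0 - z t)) {0..t}"
    by (rule has_integral_eq[rotated])
  then have initial: "(f has_integral inner v (T h (T t z0 - z t))) {0..t}"
    using has_integral_linear[OF _ bounded_linear_inner_right[of v]] unfolding f_def o_def by blast
  have f_integrable: "f integrable_on {t..t + h}"
    by (rule integrable_subinterval_real[OF has_integral_integrable[OF whole]]) (use t in auto)
  have "(f has_integral inner v (T h (T t z0 - z t)) + integral {t..t + h} f) {0..t + h}"
    by (rule has_integral_combine[OF _ _ initial integrable_integral[OF f_integrable]]) (use t h in auto)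
  with whole have "inner v (T (t + h) z0 - z (t + h)) = inner v (T h (T t z0 - z t)) + integral {t..t + h} f"
    by (rule has_integral_unique)
  moreover have "T (t + h) z0 = T h (T t z0)"
    using C0_contraction_semigroup_add[OF T h t, of z0] by (simp add: add.commute)
  ultimately have "integral {t..t + h} f = inner v (T h (z t) - z (t + h))"
    by (simp add: blinfun.diff_right inner_diff_right)
  with integrable_integral[OF f_integrable] show ?thesis
    unfolding f_def F_def by simp
qed

lemma norm_mild_solution_increment_le:
  assumes "0 \<le> t" and "t \<le> u"
  shows "(norm (z u))\<^sup>2 - (norm (z t))\<^sup>2 \<le>
    - 2 * integral {t..u} (\<lambda>s. inner (z u) (T (u - s) (\<alpha> s *\<^sub>R B (Bs (z s)))))"
proof -
  define J where "J = T (u - t) (z t) - z u"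
  have "((\<lambda>s. inner (z u) (T (u - s) (\<alpha> s *\<^sub>R B (Bs (z s))))) has_integral inner (z u) J) {t..u}"
    using mild_solution_restart[of t "u - t" "z u"] assms unfolding J_def by simp
  then have "integral {t..u} (\<lambda>s. inner (z u) (T (u - s) (\<alpha> s *\<^sub>R B (Bs (z s))))) = inner (z u) J"
    by (rule integral_unique)
  moreover have "(norm (z u + J))\<^sup>2 \<le> (norm (z t))\<^sup>2"
    unfolding J_def using C0_contraction_semigroup_norm_le[OF T, of "u - t" "z t"] assms by simp
  moreover have "(norm (z u + J))\<^sup>2 = (norm (z u))\<^sup>2 + 2 * inner (z u) J + (norm J)\<^sup>2"
    by (simp add: power2_norm_eq_inner inner_add_left inner_add_right inner_commute)
  ultimately show ?thesis
    using zero_le_power2[of "norm J"] by linarith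
qed

text \<open>The clamp \<open>max 0\<close> keeps \<open>T\<close> away from negative times, where it is unspecified; on the
  relevant triangle \<open>s \<le> t\<close> it is inactive.\<close>
lemma uniformly_continuous_on_feedback_pairing:
  assumes "0 \<le> a"
  shows "uniformly_continuous_on ({a..b} \<times> {a..b})
    (\<lambda>(t, s). inner (z t) (T (max 0 (t - s)) (B (Bs (z s)))))"
proof -
  define S where "S = {a..b} \<times> {a..b}"
  have z: "continuous_on {a..b} z"
    using continuous_on_mild_solution[OF assms] .
  have z_fst: "continuous_on S (\<lambda>p. z (fst p))"
    unfolding S_def by (rule continuous_on_compose2[OF z continuous_on_fst]) auto
  have z_snd: "continuous_on S (\<lambda>p. z (snd p))"
    unfolding S_def by (rule continuous_on_compose2[OF z continuous_on_snd]) auto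
  then have "continuous_on S (\<lambda>p. (max 0 (fst p - snd p), B (Bs (z (snd p)))))"
    by (intro continuous_intros)
  then have "continuous_on S (\<lambda>p. T (max 0 (fst p - snd p)) (B (Bs (z (snd p)))))"
    using continuous_on_compose2[OF C0_contraction_semigroup_continuous_on_joint[OF T]] by fastforce
  with z_fst have "continuous_on S (\<lambda>(t, s). inner (z t) (T (max 0 (t - s)) (B (Bs (z s)))))"
    unfolding case_prod_beta by (intro continuous_on_inner)
  then show ?thesis
    unfolding S_def by (intro compact_uniformly_continuous compact_Times compact_Icc)
qed

lemma feedback_pairing_defect_le:
  assumes "0 \<le> a" and "0 < e"
  obtains d where "0 < d"
    and "\<And>s u. a \<le> s \<Longrightarrow> s \<le> u \<Longrightarrow> u \<le> b \<Longrightarrow> u - s < d \<Longrightarrow>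
      \<alpha> s * (norm (Bs (z s)))\<^sup>2 - inner (z u) (T (u - s) (\<alpha> s *\<^sub>R B (Bs (z s)))) \<le> e"
proof -
  define Q where "Q = (\<lambda>(t, s). inner (z t) (T (max 0 (t - s)) (B (Bs (z s)))))"
  have "uniformly_continuous_on ({a..b} \<times> {a..b}) Q"
    unfolding Q_def by (rule uniformly_continuous_on_feedback_pairing[OF assms(1)])
  then obtain d where "0 < d" and close: "\<forall>p \<in> {a..b} \<times> {a..b}. \<forall>p' \<in> {a..b} \<times> {a..b}.
      dist p' p < d \<longrightarrow> dist (Q p') (Q p) < e"
    unfolding uniformly_continuous_on_def using \<open>0 < e\<close> by blast
  show thesis
  proof (rule that[OF \<open>0 < d\<close>])
    fix s u assume s: "a \<le> s" "s \<le> u" "u \<le> b" "u - s < d"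
    have "0 \<le> s" using assms s by simp
    have "\<alpha> s * (norm (Bs (z s)))\<^sup>2 - inner (z u) (T (u - s) (\<alpha> s *\<^sub>R B (Bs (z s))))
        = \<alpha> s * (Q (s, s) - Q (u, s))"
      using s C0_contraction_semigroup_zero[OF T] is_adjoint_inner_apply_self[OF adjoint]
      by (simp add: Q_def blinfun.scaleR_right max_def right_diff_distrib)
    also have "\<dots> \<le> \<alpha> s * e"
    proof (rule mult_left_mono[OF _ alpha_nonneg[OF \<open>0 \<le> s\<close>]])
      have "dist (Q (u, s)) (Q (s, s)) < e"
        using close s by (auto simp: dist_Pair_Pair dist_real_def)
      then show "Q (s, s) - Q (u, s) \<le> e"
        unfolding dist_real_def by linarith
    qed
    also have "\<dots> \<le> e"
      using alpha_le_one[OF \<open>0 \<le> s\<close>] \<open>0 < e\<close> by (simp add: mult_left_le_one_le)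
    finally show "\<alpha> s * (norm (Bs (z s)))\<^sup>2 - inner (z u) (T (u - s) (\<alpha> s *\<^sub>R B (Bs (z s)))) \<le> e" .
  qed
qed

lemma energy_increment_le:
  assumes "0 \<le> a" and "0 < e"
  obtains d where "0 < d"
    and "\<And>t h. a \<le> t \<Longrightarrow> 0 \<le> h \<Longrightarrow> h < d \<Longrightarrow> t + h \<le> b \<Longrightarrow>
      (norm (z (t + h)))\<^sup>2 + 2 * integral {t..t + h} (\<lambda>s. \<alpha> s * (norm (Bs (z s)))\<^sup>2)
        \<le> (norm (z t))\<^sup>2 + h * e"
proof -
  obtain d where "0 < d" and defect: "\<And>s u. a \<le> s \<Longrightarrow> s \<le> u \<Longrightarrow> u \<le> b \<Longrightarrow> u - s < d \<Longrightarrow>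
      \<alpha> s * (norm (Bs (z s)))\<^sup>2 - inner (z u) (T (u - s) (\<alpha> s *\<^sub>R B (Bs (z s)))) \<le> e / 2"
    using feedback_pairing_defect_le[OF assms(1), of "e / 2" b] \<open>0 < e\<close> by auto
  show thesis
  proof (rule that[OF \<open>0 < d\<close>])
    fix t h assume t: "a \<le> t" and h: "0 \<le> h" "h < d" and tb: "t + h \<le> b"
    define u where "u = t + h"
    define F where "F s = inner (z u) (T (u - s) (\<alpha> s *\<^sub>R B (Bs (z s))))" for s
    define P where "P s = \<alpha> s * (norm (Bs (z s)))\<^sup>2" for s
    have "0 \<le> t" using assms t by simp
    have F_integral: "(F has_integral integral {t..u} F) {t..u}"
      using mild_solution_restart[OF \<open>0 \<le> t\<close> h(1), of "z u"] unfolding F_def u_def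
      by (blast intro: integrable_integral has_integral_integrable)
    have P_integrable: "P integrable_on {t..u}"
      unfolding P_def using \<open>0 \<le> t\<close> continuous_on_mild_solution
      by (intro integrable_on_alpha_mult continuous_intros)
    have "P s - F s \<le> e / 2" if "s \<in> {t..u}" for s
      unfolding P_def F_def using that t h tb by (intro defect) (auto simp: u_def)
    then have "integral {t..u} P - integral {t..u} F \<le> (u - t) * (e / 2)"
      using has_integral_le[OF has_integral_diff[OF integrable_integral[OF P_integrable] F_integral]
          has_integral_const_real[of "e / 2" t u]] h(1)
      by (simp add: u_def)
    moreover have "(norm (z u))\<^sup>2 - (norm (z t))\<^sup>2 \<le> - 2 * integral {t..u} F"
      unfolding F_def using norm_mild_solution_increment_le[OF \<open>0 \<le> t\<close>] h(1) u_def by simp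
    ultimately show "(norm (z (t + h)))\<^sup>2 + 2 * integral {t..t + h} (\<lambda>s. \<alpha> s * (norm (Bs (z s)))\<^sup>2)
        \<le> (norm (z t))\<^sup>2 + h * e"
      unfolding u_def P_def by simp
  qed
qed

lemma energy_inequality:
  assumes "0 \<le> a" and "a \<le> b"
  shows "(norm (z b))\<^sup>2 + 2 * integral {a..b} (\<lambda>s. \<alpha> s * (norm (Bs (z s)))\<^sup>2) \<le> (norm (z a))\<^sup>2"
proof -
  define P where "P = (\<lambda>s. \<alpha> s * (norm (Bs (z s)))\<^sup>2)"
  define \<phi> where "\<phi> t = (norm (z t))\<^sup>2 + 2 * integral {a..t} P" for t
  have "\<phi> b \<le> \<phi> a"
  proof (rule le_if_local_increments_le[OF \<open>a \<le> b\<close>])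
    fix e :: real assume "0 < e"
    with assms(1) obtain d where "0 < d"
      and step: "\<And>t h. a \<le> t \<Longrightarrow> 0 \<le> h \<Longrightarrow> h < d \<Longrightarrow> t + h \<le> b \<Longrightarrow>
        (norm (z (t + h)))\<^sup>2 + 2 * integral {t..t + h} (\<lambda>s. \<alpha> s * (norm (Bs (z s)))\<^sup>2)
          \<le> (norm (z t))\<^sup>2 + h * e"
      using energy_increment_le[where b = b] by blast
    have "\<phi> (t + h) \<le> \<phi> t + h * e" if "a \<le> t" "0 \<le> h" "h < d" "t + h \<le> b" for t h
    proof -
      have "P integrable_on {a..t + h}"
        unfolding P_def using assms(1) continuous_on_mild_solution
        by (intro integrable_on_alpha_mult continuous_intros)
      then have "integral {a..t + h} P = integral {a..t} P + integral {t..t + h} P"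
        using that by (intro Henstock_Kurzweil_Integration.integral_combine[symmetric]) auto
      with step[OF that] show ?thesis
        unfolding \<phi>_def P_def by simp
    qed
    with \<open>0 < d\<close> show "\<exists>d>0. \<forall>t h. a \<le> t \<longrightarrow> 0 \<le> h \<longrightarrow> h < d \<longrightarrow> t + h \<le> b \<longrightarrow>
        \<phi> (t + h) \<le> \<phi> t + h * e"
      by blast
  qed
  then show ?thesis
    unfolding \<phi>_def P_def by simp
qed

lemma observation_defect_le:
  assumes a: "0 \<le> a" and s: "a \<le> s"
  shows "norm (Bs (T (s - a) (z a) - z s)) \<le> (norm B)\<^sup>2 * integral {a..s} (\<lambda>r. \<alpha> r * norm (Bs (z r)))"
proof -
  define w where "w = Bs (T (s - a) (z a) - z s)"
  define R where "R r = \<alpha> r * norm (Bs (z r))" for r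
  have restart: "((\<lambda>r. inner (B w) (T (s - r) (\<alpha> r *\<^sub>R B (Bs (z r))))) has_integral (norm w)\<^sup>2) {a..s}"
    using mild_solution_restart[OF a, of "s - a" "B w"] adjoint s
    by (simp add: is_adjoint_def w_def power2_norm_eq_inner)
  have R_integrable: "R integrable_on {a..s}"
    unfolding R_def using a continuous_on_mild_solution
    by (intro integrable_on_alpha_mult continuous_intros)
  have bound: "inner (B w) (T (s - r) (\<alpha> r *\<^sub>R B (Bs (z r)))) \<le> norm w * (norm B)\<^sup>2 * R r"
    if r: "r \<in> {a..s}" for r
  proof -
    define X where "X = T (s - r) (\<alpha> r *\<^sub>R B (Bs (z r)))"
    have "0 \<le> s - r" and \<alpha>: "0 \<le> \<alpha> r"
      using r a alpha_nonneg by auto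
    have "norm X \<le> norm (\<alpha> r *\<^sub>R B (Bs (z r)))"
      unfolding X_def by (rule C0_contraction_semigroup_norm_le[OF T \<open>0 \<le> s - r\<close>])
    also have "\<dots> \<le> \<alpha> r * (norm B * norm (Bs (z r)))"
      using mult_left_mono[OF norm_blinfun \<alpha>] \<alpha> by simp
    finally have X: "norm X \<le> \<alpha> r * (norm B * norm (Bs (z r)))" .
    have "inner (B w) X = inner w (Bs X)"
      using adjoint by (simp add: is_adjoint_def)
    also have "\<dots> \<le> norm w * norm (Bs X)"
      by (rule norm_cauchy_schwarz)
    also have "\<dots> \<le> norm w * (norm B * norm X)"
      by (rule mult_left_mono[OF is_adjoint_norm_apply_le[OF adjoint]]) simp
    also have "\<dots> \<le> norm w * (norm B * (\<alpha> r * (norm B * norm (Bs (z r)))))"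
      using X by (simp add: mult_left_mono)
    also have "\<dots> = norm w * (norm B)\<^sup>2 * R r"
      by (simp add: R_def power2_eq_square algebra_simps)
    finally show ?thesis
      unfolding X_def .
  qed
  have "(norm w)\<^sup>2 \<le> norm w * ((norm B)\<^sup>2 * integral {a..s} R)"
    using has_integral_le[OF restart has_integral_mult_right[OF integrable_integral[OF R_integrable]] bound]
    by (simp add: algebra_simps)
  moreover have "0 \<le> integral {a..s} R"
    using R_integrable a alpha_nonneg by (intro integral_nonneg) (auto simp: R_def)
  ultimately show ?thesis
    unfolding w_def[symmetric] R_def[abs_def]
    by (cases "w = 0") (auto simp: power2_eq_square mult_le_cancel_left)
qed

lemma square_integral_alpha_observation_le:
  assumes a: "0 \<le> a" and s: "a \<le> s"
  shows "(integral {a..s} (\<lambda>r. \<alpha> r * norm (Bs (z r))))\<^sup>2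
    \<le> (s - a) * integral {a..s} (\<lambda>r. \<alpha> r * (norm (Bs (z r)))\<^sup>2)"
proof -
  define R where "R = (\<lambda>r. \<alpha> r * norm (Bs (z r)))"
  define P where "P = (\<lambda>r. \<alpha> r * (norm (Bs (z r)))\<^sup>2)"
  have z: "continuous_on {a..s} z"
    using continuous_on_mild_solution[OF a] .
  have R_integrable: "R integrable_on {a..s}" and P_integrable: "P integrable_on {a..s}"
    unfolding R_def P_def using a z by (auto intro!: integrable_on_alpha_mult continuous_intros)
  have "(\<lambda>r. (\<alpha> r * \<alpha> r) * (norm (Bs (z r)))\<^sup>2) integrable_on {a..s}"
    using a alpha_nonneg alpha_le_one z
    by (intro integrable_on_mult_continuous_bounded_measurable[where K = 1] borel_measurable_times
        borel_measurable_lebesgue_on_if_restrict_lborel[OF \<alpha>_measurable] continuous_intros)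
      (auto simp: abs_mult mult_le_one)
  then have R2_integrable: "(\<lambda>r. (R r)\<^sup>2) integrable_on {a..s}"
    by (simp add: R_def power2_eq_square algebra_simps)
  have "integral {a..s} (\<lambda>r. (R r)\<^sup>2) \<le> integral {a..s} P"
  proof (rule integral_le[OF R2_integrable P_integrable])
    fix r assume "r \<in> {a..s}"
    then have "\<alpha> r * \<alpha> r \<le> \<alpha> r"
      using a alpha_nonneg alpha_le_one by (simp add: mult_left_le)
    then show "(R r)\<^sup>2 \<le> P r"
      unfolding R_def P_def power_mult_distrib power2_eq_square[of "\<alpha> r"]
      by (intro mult_right_mono) auto
  qed
  then show ?thesis
    using Cauchy_Schwarz_integral_Icc[OF R_integrable R2_integrable s] mult_left_mono[of _ _ "s - a"] s
    unfolding R_def P_def by fastforce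
qed

lemma observation_le:
  assumes a: "0 \<le> a" and s: "a \<le> s"
  shows "(norm (Bs (T (s - a) (z a))))\<^sup>2 \<le>
    2 * (norm (Bs (z s)))\<^sup>2 + 2 * (norm B) ^ 4 * ((s - a) * integral {a..s} (\<lambda>r. \<alpha> r * (norm (Bs (z r)))\<^sup>2))"
proof -
  define X where "X = norm (Bs (z s))"
  define Y where "Y = (norm B)\<^sup>2 * integral {a..s} (\<lambda>r. \<alpha> r * norm (Bs (z r)))"
  have "norm (Bs (T (s - a) (z a))) \<le> norm (Bs (z s)) + norm (Bs (T (s - a) (z a) - z s))"
    using norm_triangle_ineq[of "Bs (z s)" "Bs (T (s - a) (z a) - z s)"] by (simp add: blinfun.diff_right)
  also have "\<dots> \<le> X + Y"
    using observation_defect_le[OF a s] unfolding X_def Y_def by simp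
  finally have "(norm (Bs (T (s - a) (z a))))\<^sup>2 \<le> (X + Y)\<^sup>2"
    by (simp add: power_mono)
  also have "\<dots> \<le> 2 * X\<^sup>2 + 2 * Y\<^sup>2"
    using zero_le_power2[of "X - Y"] unfolding power2_sum power2_diff by linarith
  also have "Y\<^sup>2 = (norm B) ^ 4 * (integral {a..s} (\<lambda>r. \<alpha> r * norm (Bs (z r))))\<^sup>2"
    by (simp add: Y_def power_mult_distrib flip: power_mult)
  also have "\<dots> \<le> (norm B) ^ 4 * ((s - a) * integral {a..s} (\<lambda>r. \<alpha> r * (norm (Bs (z r)))\<^sup>2))"
    using square_integral_alpha_observation_le[OF a s] by (simp add: mult_left_mono)
  finally show ?thesis
    unfolding X_def by simp
qed

lemma observation_le_interval:
  assumes a: "0 \<le> a" and s: "a \<le> s" "s \<le> b"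
  shows "(norm (Bs (T (s - a) (z a))))\<^sup>2 \<le>
    2 * (norm (Bs (z s)))\<^sup>2 + 2 * (norm B) ^ 4 * ((b - a) * integral {a..b} (\<lambda>r. \<alpha> r * (norm (Bs (z r)))\<^sup>2))"
proof -
  define P where "P = (\<lambda>r. \<alpha> r * (norm (Bs (z r)))\<^sup>2)"
  have P_integrable: "P integrable_on {a..b}"
    unfolding P_def using a continuous_on_mild_solution
    by (intro integrable_on_alpha_mult continuous_intros)
  have P_nonneg: "0 \<le> P r" if "a \<le> r" for r
    unfolding P_def using that a alpha_nonneg by auto
  have "integral {a..s} P + integral {s..b} P = integral {a..b} P"
    using s by (intro Henstock_Kurzweil_Integration.integral_combine P_integrable)
  moreover have "0 \<le> integral {s..b} P" and "0 \<le> integral {a..s} P"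
    using s P_nonneg by (auto intro!: integral_nonneg integrable_subinterval_real[OF P_integrable])
  ultimately have "(s - a) * integral {a..s} P \<le> (b - a) * integral {a..b} P"
    using s by (intro mult_mono) auto
  then have "2 * (norm B) ^ 4 * ((s - a) * integral {a..s} P) \<le> 2 * (norm B) ^ 4 * ((b - a) * integral {a..b} P)"
    by (rule mult_left_mono) simp
  with observation_le[OF a s(1)] show ?thesis
    unfolding P_def by linarith
qed

lemma integral_observation_le:
  assumes a: "0 \<le> a" and "a \<le> b"
  shows "integral {0..b - a} (\<lambda>t. \<alpha> (t + a) * (norm (Bs (T t (z a))))\<^sup>2)
    \<le> (2 + 2 * (b - a)\<^sup>2 * (norm B) ^ 4) * integral {a..b} (\<lambda>r. \<alpha> r * (norm (Bs (z r)))\<^sup>2)"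
proof -
  define P where "P = (\<lambda>r. \<alpha> r * (norm (Bs (z r)))\<^sup>2)"
  define f where "f = (\<lambda>s. \<alpha> s * (norm (Bs (T (s - a) (z a))))\<^sup>2)"
  define I where "I = integral {a..b} P"
  define C where "C = 2 * (norm B) ^ 4 * ((b - a) * I)"
  have P_integrable: "P integrable_on {a..b}"
    unfolding P_def using a continuous_on_mild_solution
    by (intro integrable_on_alpha_mult continuous_intros)
  have "0 \<le> I"
    unfolding I_def P_def using a alpha_nonneg by (intro integral_nonneg[OF P_integrable[unfolded P_def]]) auto
  with \<open>a \<le> b\<close> have "0 \<le> C"
    unfolding C_def by simp
  have "continuous_on {a..b} (\<lambda>s. T (s - a) (z a))"
    by (rule continuous_on_compose2[OF C0_contraction_semigroup_continuous_on[OF T]])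
      (auto intro!: continuous_intros)
  then have "continuous_on {a..b} (\<lambda>s. Bs (T (s - a) (z a)))"
    by (rule bounded_linear.continuous_on[OF blinfun.bounded_linear_right])
  then have f_integrable: "f integrable_on {a..b}"
    unfolding f_def using a by (intro integrable_on_alpha_mult continuous_on_power continuous_on_norm)
  have "f s \<le> 2 * P s + C" if s: "s \<in> {a..b}" for s
  proof -
    have "0 \<le> s" "0 \<le> \<alpha> s" "\<alpha> s \<le> 1"
      using s a alpha_nonneg alpha_le_one by auto
    then have "f s \<le> \<alpha> s * (2 * (norm (Bs (z s)))\<^sup>2 + C)"
      unfolding f_def C_def I_def P_def using observation_le_interval[OF a] s
      by (intro mult_left_mono) auto
    also have "\<dots> \<le> 2 * P s + C"
      using \<open>\<alpha> s \<le> 1\<close> \<open>0 \<le> C\<close> mult_right_mono[of "\<alpha> s" 1 C] by (simp add: P_def algebra_simps)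
    finally show ?thesis .
  qed
  moreover have "((\<lambda>s. 2 * P s + C) has_integral 2 * I + (b - a) * C) {a..b}"
    unfolding I_def using has_integral_const_real[of C a b] \<open>a \<le> b\<close>
    by (intro has_integral_add has_integral_mult_right integrable_integral[OF P_integrable]) simp
  ultimately have "integral {a..b} f \<le> 2 * I + (b - a) * C"
    by (rule has_integral_le[OF integrable_integral[OF f_integrable], rotated])
  moreover have "integral {0..b - a} (\<lambda>t. \<alpha> (t + a) * (norm (Bs (T t (z a))))\<^sup>2) = integral {a..b} f"
    using integral_shift_Icc_real[of 0 "b - a" f a] by (simp add: f_def o_def add.commute)
  moreover have "2 * I + (b - a) * C = (2 + 2 * (b - a)\<^sup>2 * (norm B) ^ 4) * I"
    by (simp add: C_def power2_eq_square algebra_simps)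
  ultimately show ?thesis
    unfolding I_def P_def by simp
qed

end

theorem lemma2p1:
  fixes T :: "real \<Rightarrow> ('h::{real_inner,complete_space} \<Rightarrow>\<^sub>L 'h)"
    and B :: "'u::{real_inner,complete_space} \<Rightarrow>\<^sub>L 'h"
    and Bs :: "'h \<Rightarrow>\<^sub>L 'u"
    and \<alpha> :: "real \<Rightarrow> real"
    and z0 :: 'h
    and z :: "real \<Rightarrow> 'h"
    and a b :: real
  assumes "C0_contraction_semigroup T"
    and "is_adjoint B Bs"
    and "\<alpha> \<in> borel_measurable (restrict_space lborel {0..})"
    and "\<forall>t. 0 \<le> t \<longrightarrow> 0 \<le> \<alpha> t \<and> \<alpha> t \<le> 1"
    and "mild_solution T B Bs \<alpha> z0 z"
    and "0 \<le> a" and "a \<le> b"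
  shows "V (z b) - V (z a) \<le>
    - (1 / (2 + 2 * (b - a)\<^sup>2 * (norm B) ^ 4)) *
      integral {0..b - a} (\<lambda>t. \<alpha> (t + a) * (norm (blinfun_apply Bs (blinfun_apply (T t) (z a))))\<^sup>2)"
proof -
  define c where "c = 2 + 2 * (b - a)\<^sup>2 * (norm B) ^ 4"
  define I where "I = integral {a..b} (\<lambda>r. \<alpha> r * (norm (Bs (z r)))\<^sup>2)"
  define K where "K = integral {0..b - a} (\<lambda>t. \<alpha> (t + a) * (norm (Bs (T t (z a))))\<^sup>2)"
  have "0 < c"
    unfolding c_def by (simp add: add_pos_nonneg)
  have "V (z b) - V (z a) \<le> - I"
    using energy_inequality[OF assms] unfolding V_def I_def by simp
  moreover have "K \<le> c * I"
    using integral_observation_le[OF assms] unfolding K_def c_def I_def .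
  moreover have "K \<le> c * I \<longleftrightarrow> K / c \<le> I"
    using \<open>0 < c\<close> by (simp add: divide_le_eq mult.commute)
  ultimately have "V (z b) - V (z a) \<le> - (K / c)"
    by linarith
  then show ?thesis
    unfolding K_def c_def by simp
qed

end
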